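(* Let $Q \ge 2$ be an integer, let $F_Q = \{a/q : 1 \le a \le q \le Q,\ \gcd(a,q) = 1\}$ be the $Q$-th Farey sequence with elements listed in increasing order as $\gamma_1 < \gamma_2 < \cdots < \gamma_N$, where $N = |F_Q|$, and let $$S_2(Q) = \sum_{j=1}^{N-1} (\gamma_{j+1} - \gamma_j)^2.$$ Then $$S_2(Q) = \frac{12 \log Q}{\pi^2 Q^2} - \frac{2}{Q^2}\,\frac{\zeta'(2)}{\zeta(2)^2} + (2\gamma + 1)\frac{6}{Q^2 \pi^2} + R_{14},$$ where $$R_{14} \le \frac{64 (\log Q)^2 + 106 \log Q + 269}{Q^3}.$$
   Context: $\gamma$ denotes the Euler–Mascheroni constant, $\zeta$ is the Riemann zeta function, and $\log$ is the natural logarithm. *)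

theory Defs
  imports "HOL-Analysis.Analysis"
begin

definition zeta_real :: "real \<Rightarrow> real" where
  "zeta_real s = (\<Sum>n. 1 / (real (Suc n)) powr s)"

definition farey :: "nat \<Rightarrow> real set" where
  "farey Q = {real a / real q | a q. 1 \<le> a \<and> a \<le> q \<and> q \<le> Q \<and> coprime a q}"

definition farey_list :: "nat \<Rightarrow> real list" where
  "farey_list Q = sorted_list_of_set (farey Q)"

definition S2 :: "nat \<Rightarrow> real" where
  "S2 Q = (let g = farey_list Q in
     \<Sum>j < length g - 1. (g ! (j + 1) - g ! j)^2)"

end

theory Submission
  imports Defs "HOL-Computational_Algebra.Squarefree"
begin

(*
  If a/q < b/r are neighbours in F_Q then b q - a r = 1 and q, r <= Q < q + r, so every gap is at
  most 1/(q r) for a coprime pair (q, r) of this kind, distinct gaps give distinct pairs, and the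
  pair (1, Q) never occurs. Hence S_2(Q) <= C(Q) - 1/Q^2, where C(Q) sums 1/(q r)^2 over these
  coprime pairs. Moebius inversion gives C(Q) = sum_d mu(d) d^-4 V(floor(Q/d)), where V(m) is the
  same sum without the coprimality condition. Bracketing 1/k^2 between telescoping differences
  gives 2 log y + 2 gamma + 7/10 - O(log y / y) <= y^2 V(floor y) <= 2 log y + 2 gamma + 3/2
  + O(log y / y). Summing against mu(d)/d^2 produces 1/zeta(2) = 6/pi^2 and
  sum_n mu(n) log n / n^2 = zeta'(2)/zeta(2)^2 (differentiate 1/zeta), with tails controlled by
  telescoping majorants. Centring at 11/10 instead of 1 and the spread of the two constants cost
  at most 3/(5 pi^2) + (2/5) zeta(2) < 1, which the missing pair (1, Q) pays for.
*)

section \<open>Dirichlet series with bounded coefficients\<close>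

definition dirichlet_series :: "(nat \<Rightarrow> real) \<Rightarrow> real \<Rightarrow> real" where
  "dirichlet_series a s = (\<Sum>n. a (Suc n) / real (Suc n) powr s)"

lemma zeta_real_eq_dirichlet_series: "zeta_real = dirichlet_series (\<lambda>_. 1)"
  by (simp add: fun_eq_iff zeta_real_def dirichlet_series_def)

lemma summable_inverse_Suc_powr:
  assumes "s > 1" shows "summable (\<lambda>n. 1 / real (Suc n) powr s)"
proof -
  have "summable (\<lambda>n. real n powr (-s))" using assms by (simp add: summable_real_powr_iff)
  hence "summable (\<lambda>n. real (Suc n) powr (-s))" by (subst summable_Suc_iff)
  thus ?thesis by (simp add: powr_minus divide_inverse)
qed

lemma summable_dirichlet_series:
  assumes "s > 1" "\<And>n. \<bar>a n\<bar> \<le> 1"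
  shows "summable (\<lambda>n. a (Suc n) / real (Suc n) powr s)"
proof (rule summable_comparison_test[OF _ summable_inverse_Suc_powr[OF assms(1)]])
  show "\<exists>N. \<forall>n\<ge>N. norm (a (Suc n) / real (Suc n) powr s) \<le> 1 / real (Suc n) powr s"
    using assms(2) by (auto simp: abs_div intro!: divide_right_mono)
qed

lemma norm_dirichlet_deriv_term_le:
  assumes "\<epsilon> > 0" "\<bar>c\<bar> \<le> 1"
  shows "norm (c * ln (real (Suc n)) / real (Suc n) powr s) \<le> 1 / \<epsilon> * (1 / real (Suc n) powr (s - \<epsilon>))"
proof -
  have ln0: "ln (real (Suc n)) \<ge> 0" by simp
  have "norm (c * ln (real (Suc n)) / real (Suc n) powr s) = \<bar>c\<bar> * ln (real (Suc n)) / real (Suc n) powr s"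
    using ln0 by (simp add: abs_mult abs_div)
  also have "\<dots> \<le> ln (real (Suc n)) / real (Suc n) powr s"
    using assms(2) ln0 by (intro divide_right_mono mult_left_le_one_le) auto
  also have "\<dots> \<le> (real (Suc n) powr \<epsilon> / \<epsilon>) / real (Suc n) powr s"
    using assms(1) by (intro divide_right_mono ln_powr_bound) auto
  also have "\<dots> = 1 / \<epsilon> * (1 / real (Suc n) powr (s - \<epsilon>))"
    by (simp add: powr_diff field_simps)
  finally show ?thesis .
qed

lemma summable_dirichlet_series_deriv:
  assumes "s > 1" "\<And>n. \<bar>a n\<bar> \<le> 1"
  shows "summable (\<lambda>n. a (Suc n) * ln (real (Suc n)) / real (Suc n) powr s)"
proof (rule summable_comparison_test)
  define \<epsilon> where "\<epsilon> = (s - 1) / 2"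
  show "summable (\<lambda>n. 1 / \<epsilon> * (1 / real (Suc n) powr (s - \<epsilon>)))"
    using assms(1) by (intro summable_mult summable_inverse_Suc_powr) (simp add: \<epsilon>_def field_simps)
  show "\<exists>N. \<forall>n\<ge>N. norm (a (Suc n) * ln (real (Suc n)) / real (Suc n) powr s)
           \<le> 1 / \<epsilon> * (1 / real (Suc n) powr (s - \<epsilon>))"
    using assms by (intro exI allI impI norm_dirichlet_deriv_term_le) (auto simp: \<epsilon>_def)
qed

lemma has_field_derivative_const_div_powr:
  fixes b k :: real
  assumes "b > 0"
  shows "((\<lambda>x. k / b powr x) has_field_derivative (- (k * ln b) / b powr x)) (at x within S)"
proof -
  have "(\<lambda>x. k / b powr x) = (\<lambda>x. k * exp (- (x * ln b)))"
    using assms by (simp add: fun_eq_iff powr_def exp_minus divide_inverse)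
  moreover have "((\<lambda>x. k * exp (- (x * ln b))) has_field_derivative (- (k * ln b) / b powr x)) (at x within S)"
    using assms by (auto intro!: derivative_eq_intros simp: powr_def exp_minus divide_inverse)
  ultimately show ?thesis by simp
qed

lemma has_field_derivative_dirichlet_series:
  assumes "s > 1" "\<And>n. \<bar>a n\<bar> \<le> 1"
  shows "(dirichlet_series a has_field_derivative
           - (\<Sum>n. a (Suc n) * ln (real (Suc n)) / real (Suc n) powr s)) (at s)"
proof -
  define \<sigma> where "\<sigma> = (1 + s) / 2"
  define \<epsilon> where "\<epsilon> = (\<sigma> - 1) / 2"
  have \<sigma>: "\<sigma> > 1" "\<sigma> < s" and \<epsilon>: "\<epsilon> > 0" using assms(1) by (auto simp: \<sigma>_def \<epsilon>_def)
  define f where "f n x = a (Suc n) / real (Suc n) powr x" for n x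
  define f' where "f' n x = - (a (Suc n) * ln (real (Suc n))) / real (Suc n) powr x" for n x
  define M where "M n = 1 / \<epsilon> * (1 / real (Suc n) powr (\<sigma> - \<epsilon>))" for n
  have "summable M" unfolding M_def
    using \<sigma> by (intro summable_mult summable_inverse_Suc_powr) (simp add: \<epsilon>_def field_simps)
  moreover have "norm (f' n x) \<le> M n" if "x \<in> {\<sigma><..}" for n x
  proof -
    have "norm (f' n x) \<le> 1 / \<epsilon> * (1 / real (Suc n) powr (x - \<epsilon>))"
      using norm_dirichlet_deriv_term_le[OF \<epsilon> assms(2)] by (simp add: f'_def)
    also have "\<dots> \<le> M n"
      unfolding M_def using that \<epsilon>
      by (intro mult_left_mono divide_left_mono powr_mono) auto
    finally show ?thesis .
  qed
  ultimately have "uniformly_convergent_on {\<sigma><..} (\<lambda>n x. \<Sum>i<n. f' i x)"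
    unfolding uniformly_convergent_on_def by (blast intro: Weierstrass_m_test)
  moreover have "(f n has_field_derivative f' n x) (at x within {\<sigma><..})" for n x
    unfolding f_def f'_def by (rule has_field_derivative_const_div_powr) simp
  ultimately have "((\<lambda>x. \<Sum>n. f n x) has_field_derivative (\<Sum>n. f' n s)) (at s)"
    using \<sigma> summable_dirichlet_series[OF assms]
    by (intro has_field_derivative_series'(2)[of "{\<sigma><..}" f f' s]) (auto simp: f_def interior_open)
  moreover have "(\<Sum>n. f' n s) = - (\<Sum>n. a (Suc n) * ln (real (Suc n)) / real (Suc n) powr s)"
    unfolding f'_def using summable_dirichlet_series_deriv[OF assms]
    by (subst suminf_minus[symmetric]) auto
  moreover have "(\<lambda>x. \<Sum>n. f n x) = dirichlet_series a"
    by (simp add: fun_eq_iff f_def dirichlet_series_def)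
  ultimately show ?thesis by simp
qed

section \<open>The Moebius function\<close>

definition moebius_mu :: "nat \<Rightarrow> real" where
  "moebius_mu n = (if squarefree n then (-1) ^ card (prime_factors n) else 0)"

lemma abs_moebius_mu_le: "\<bar>moebius_mu n\<bar> \<le> 1"
  by (simp add: moebius_mu_def)

lemma moebius_mu_eq_0:
  assumes "prime p" "p^2 dvd n" shows "moebius_mu n = 0"
proof -
  have "\<not> squarefree n" using assms by (intro not_squarefreeI[of p n]) auto
  thus ?thesis by (simp add: moebius_mu_def)
qed

lemma moebius_mu_prime_mult:
  assumes p: "prime p" and "\<not> p dvd n" "n > 0"
  shows "moebius_mu (p * n) = - moebius_mu n"
proof -
  have "coprime p n" using assms by (simp add: prime_imp_coprime)
  hence sq: "squarefree (p * n) \<longleftrightarrow> squarefree n"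
    using p by (auto simp: squarefree_mult_coprime squarefree_prime intro: squarefree_mono[rotated])
  have "prime_factors (p * n) = insert p (prime_factors n)"
    using assms by (subst prime_factors_product) (auto simp: prime_prime_factors prime_gt_0_nat)
  moreover have "p \<notin> prime_factors n" using assms by (auto simp: in_prime_factors_iff)
  ultimately have "card (prime_factors (p * n)) = Suc (card (prime_factors n))" by simp
  thus ?thesis unfolding moebius_mu_def sq by simp
qed

lemma sum_moebius_mu_divisors:
  assumes "n > 0"
  shows "(\<Sum>d | d dvd n. moebius_mu d) = (if n = 1 then 1 else 0)"
proof (cases "n = 1")
  case False
  then obtain p where p: "prime p" "p dvd n" using prime_factor_nat by blast
  define m where "m = n div p"
  have n: "n = p * m" using p by (simp add: m_def)
  have "m > 0" "p > 0" using assms n p by (auto simp: prime_gt_0_nat)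
  define D where "D = {d. d dvd m \<and> \<not> p dvd d}"
  have fin: "finite {d. d dvd n}" "finite {d. d dvd m}" using assms \<open>m > 0\<close> by simp_all
  have "d dvd n \<longleftrightarrow> d \<in> D \<or> d \<in> (\<lambda>e. p * e) ` {e. e dvd m}" for d
  proof (cases "p dvd d")
    case False
    hence "coprime d p" using p by (metis prime_imp_coprime coprime_commute)
    thus ?thesis using False by (auto simp: D_def n coprime_dvd_mult_right_iff)
  next
    case True
    then obtain e where "d = p * e" by (elim dvdE)
    thus ?thesis using \<open>p > 0\<close> by (auto simp: D_def n)
  qed
  hence "{d. d dvd n} = D \<union> (\<lambda>e. p * e) ` {e. e dvd m}" "D \<inter> (\<lambda>e. p * e) ` {e. e dvd m} = {}"
    by (auto simp: D_def)
  hence "(\<Sum>d | d dvd n. moebius_mu d) = (\<Sum>d\<in>D. moebius_mu d) + (\<Sum>e | e dvd m. moebius_mu (p * e))"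
    using fin \<open>p > 0\<close> by (simp add: sum.union_disjoint sum.reindex inj_on_def)
  also have "(\<Sum>e | e dvd m. moebius_mu (p * e)) = (\<Sum>e | e dvd m. if p dvd e then 0 else - moebius_mu e)"
  proof (intro sum.cong refl)
    fix e assume "e \<in> {e. e dvd m}"
    hence "e > 0" using \<open>m > 0\<close> by (auto intro: Nat.gr0I)
    show "moebius_mu (p * e) = (if p dvd e then 0 else - moebius_mu e)"
      using moebius_mu_eq_0[OF p(1), of "p * e"] moebius_mu_prime_mult[OF p(1) _ \<open>e > 0\<close>]
      by (auto simp: power2_eq_square)
  qed
  also have "\<dots> = (\<Sum>e\<in>{e \<in> {e. e dvd m}. \<not> p dvd e}. - moebius_mu e)"
    using fin by (subst sum.inter_filter) (auto intro!: sum.cong)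
  also have "\<dots> = - (\<Sum>d\<in>D. moebius_mu d)" by (simp add: D_def sum_negf)
  finally show ?thesis using False by simp
qed (simp add: moebius_mu_def)

section \<open>The Dirichlet series of \<open>\<mu>\<close> is \<open>1/\<zeta>\<close>\<close>

definition hyperbola_pairs :: "nat \<Rightarrow> (nat \<times> nat) set" where
  "hyperbola_pairs N = {(d, e). 1 \<le> d \<and> 1 \<le> e \<and> d * e \<le> N}"

lemma sum_moebius_mu_hyperbola:
  assumes "N \<ge> 1"
  shows "(\<Sum>(d, e)\<in>hyperbola_pairs N. moebius_mu d / real (d * e) powr s) = 1"
proof -
  have "(\<Sum>(d, e)\<in>hyperbola_pairs N. moebius_mu d / real (d * e) powr s)
      = (\<Sum>(n, d)\<in>Sigma {1..N} (\<lambda>n. {d. d dvd n}). moebius_mu d / real n powr s)"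
  proof (rule sum.reindex_bij_witness[where i = "\<lambda>(n, d). (d, n div d)" and j = "\<lambda>(d, e). (d * e, d)"])
    fix a assume "a \<in> Sigma {1..N} (\<lambda>n. {d. d dvd n})"
    then obtain n d where a: "a = (n, d)" "1 \<le> n" "n \<le> N" "d dvd n" by auto
    moreover from a have "d \<ge> 1" "n div d \<ge> 1" "d * (n div d) = n"
      by (auto intro: Nat.gr0I simp: Suc_le_eq dvd_div_eq_0_iff)
    ultimately show "(case (case a of (n, d) \<Rightarrow> (d, n div d)) of (d, e) \<Rightarrow> (d * e, d)) = a"
      "(case a of (n, d) \<Rightarrow> (d, n div d)) \<in> hyperbola_pairs N"
      by (auto simp: hyperbola_pairs_def)
  next
    fix b assume "b \<in> hyperbola_pairs N"
    then obtain d e where "b = (d, e)" "1 \<le> d" "1 \<le> e" "d * e \<le> N" by (auto simp: hyperbola_pairs_def)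
    moreover have "1 \<le> d * e" using \<open>1 \<le> d\<close> \<open>1 \<le> e\<close> by simp
    ultimately show "(case (case b of (d, e) \<Rightarrow> (d * e, d)) of (n, d) \<Rightarrow> (d, n div d)) = b"
      "(case b of (d, e) \<Rightarrow> (d * e, d)) \<in> Sigma {1..N} (\<lambda>n. {d. d dvd n})"
      "(case case b of (d, e) \<Rightarrow> (d * e, d) of (n, d) \<Rightarrow> moebius_mu d / real n powr s)
         = (case b of (d, e) \<Rightarrow> moebius_mu d / real (d * e) powr s)"
      by auto
  qed
  also have "\<dots> = (\<Sum>n=1..N. \<Sum>d | d dvd n. moebius_mu d / real n powr s)"
    by (rule sum.Sigma[symmetric]) auto
  also have "\<dots> = (\<Sum>n=1..N. (\<Sum>d | d dvd n. moebius_mu d) / real n powr s)"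
    by (simp add: sum_divide_distrib)
  also have "\<dots> = (\<Sum>n\<in>{1}. 1 / real n powr s)"
    using assms by (intro sum.mono_neutral_cong_right) (auto simp: sum_moebius_mu_divisors, simp add: moebius_mu_def)
  finally show ?thesis by simp
qed

lemma hyperbola_pairs_subset: "hyperbola_pairs N \<subseteq> {1..N} \<times> {1..N}"
proof
  fix p assume "p \<in> hyperbola_pairs N"
  then obtain d e where "p = (d, e)" "1 \<le> d" "1 \<le> e" "d * e \<le> N"
    by (auto simp: hyperbola_pairs_def)
  moreover have "d \<le> N" "e \<le> N"
    using calculation le_trans[of d "d * e" N] le_trans[of e "d * e" N] by simp_all
  ultimately show "p \<in> {1..N} \<times> {1..N}" by simp
qed

lemma sum_inverse_powr_le_suminf:
  assumes "s > 1"
  shows "(\<Sum>d=1..N. 1 / real d powr s) \<le> (\<Sum>n. 1 / real (Suc n) powr s)"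
proof -
  have "(\<Sum>d=1..N. 1 / real d powr s) = (\<Sum>n<N. 1 / real (Suc n) powr s)"
    by (subst sum_bounds_lt_plus1[symmetric]) (rule refl)
  also have "\<dots> \<le> (\<Sum>n. 1 / real (Suc n) powr s)"
    using assms by (intro sum_le_suminf summable_inverse_Suc_powr) auto
  finally show ?thesis .
qed

text \<open>Split \<open>(d e) powr (-s) = (d e) powr (-1-\<delta>) * (d e) powr (-\<delta>)\<close> and use \<open>d e > N\<close> on the
  second factor.\<close>

lemma abs_moebius_term_off_hyperbola_le:
  assumes "\<delta> > 0" "1 \<le> d" "1 \<le> e" "1 \<le> N" "N < d * e"
  shows "\<bar>moebius_mu d / real (d * e) powr (1 + 2 * \<delta>)\<bar>
           \<le> real N powr (-\<delta>) * (1 / real d powr (1 + \<delta>) * (1 / real e powr (1 + \<delta>)))"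
proof -
  have "real N \<le> real (d * e)" using assms(5) by (simp only: of_nat_le_iff)
  have "\<bar>moebius_mu d / real (d * e) powr (1 + 2 * \<delta>)\<bar>
      \<le> 1 / (real (d * e) powr (1 + \<delta>) * real (d * e) powr \<delta>)"
    by (simp add: abs_div powr_add[symmetric] divide_right_mono abs_moebius_mu_le add_ac)
  also have "\<dots> \<le> 1 / (real (d * e) powr (1 + \<delta>) * real N powr \<delta>)"
    using assms \<open>real N \<le> _\<close>
    by (intro divide_left_mono mult_left_mono powr_mono2 mult_pos_pos) (auto simp del: of_nat_mult)
  also have "\<dots> = real N powr (-\<delta>) * (1 / real d powr (1 + \<delta>) * (1 / real e powr (1 + \<delta>)))"
    using assms by (simp add: powr_mult powr_minus field_simps)
  finally show ?thesis .
qed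

lemma moebius_zeta_partial_product_error:
  assumes "s > 1" "N \<ge> 1"
  defines "\<delta> \<equiv> (s - 1) / 2"
  shows "\<bar>(\<Sum>d=1..N. moebius_mu d / real d powr s) * (\<Sum>e=1..N. 1 / real e powr s) - 1\<bar>
           \<le> (\<Sum>n. 1 / real (Suc n) powr (1 + \<delta>))^2 * real N powr (-\<delta>)"
proof -
  have \<delta>: "\<delta> > 0" "s = 1 + 2 * \<delta>" using assms(1) by (simp_all add: \<delta>_def field_simps)
  define R where "R = {1..N} \<times> {1..N} - hyperbola_pairs N"
  define f where "f = (\<lambda>(d, e). moebius_mu d / real (d * e) powr s)"
  define g where "g = (\<lambda>(d, e). real N powr (-\<delta>) * (1 / real d powr (1 + \<delta>) * (1 / real e powr (1 + \<delta>))))"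
  have "(\<Sum>d=1..N. moebius_mu d / real d powr s) * (\<Sum>e=1..N. 1 / real e powr s)
      = (\<Sum>p\<in>{1..N} \<times> {1..N}. f p)"
    by (simp add: f_def sum_product sum.cartesian_product powr_mult case_prod_beta)
  also have "\<dots> = (\<Sum>p\<in>hyperbola_pairs N. f p) + sum f R"
    using hyperbola_pairs_subset
    by (simp add: R_def sum.subset_diff[of "hyperbola_pairs N"] add.commute)
  also have "(\<Sum>p\<in>hyperbola_pairs N. f p) = 1"
    using sum_moebius_mu_hyperbola[OF assms(2)] by (simp add: f_def)
  finally have "\<bar>(\<Sum>d=1..N. moebius_mu d / real d powr s) * (\<Sum>e=1..N. 1 / real e powr s) - 1\<bar>
      = \<bar>sum f R\<bar>" by simp
  also have "\<dots> \<le> sum g R"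
  proof (rule order_trans[OF sum_abs sum_mono])
    fix p assume "p \<in> R"
    then obtain d e where "p = (d, e)" "(d, e) \<in> {1..N} \<times> {1..N}" "(d, e) \<notin> hyperbola_pairs N"
      unfolding R_def by (cases p) auto
    moreover from this have "1 \<le> d" "1 \<le> e" "N < d * e" by (auto simp: hyperbola_pairs_def)
    ultimately show "\<bar>f p\<bar> \<le> g p"
      using assms(2) abs_moebius_term_off_hyperbola_le[OF \<delta>(1)] by (simp add: f_def g_def \<delta>(2))
  qed
  also have "\<dots> \<le> sum g ({1..N} \<times> {1..N})"
    by (intro sum_mono2) (auto simp: R_def g_def)
  also have "\<dots> = real N powr (-\<delta>) * (\<Sum>d=1..N. 1 / real d powr (1 + \<delta>))^2"
    unfolding g_def sum.cartesian_product[symmetric] power2_eq_square sum_product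
    by (simp only: sum_distrib_left split_beta fst_conv snd_conv)
  also have "\<dots> \<le> real N powr (-\<delta>) * (\<Sum>n. 1 / real (Suc n) powr (1 + \<delta>))^2"
    using sum_inverse_powr_le_suminf[of "1 + \<delta>" N] \<delta>
    by (intro mult_left_mono power_mono sum_nonneg) auto
  finally show ?thesis by (simp add: mult.commute)
qed

lemma dirichlet_series_moebius_mu_mult_zeta:
  assumes "s > 1"
  shows "dirichlet_series moebius_mu s * zeta_real s = 1"
proof -
  define \<delta> where "\<delta> = (s - 1) / 2"
  define Z where "Z = (\<Sum>n. 1 / real (Suc n) powr (1 + \<delta>))"
  define P where "P N = (\<Sum>n<N. moebius_mu (Suc n) / real (Suc n) powr s) * (\<Sum>n<N. 1 / real (Suc n) powr s)" for N
  have "P \<longlonglongrightarrow> dirichlet_series moebius_mu s * zeta_real s"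
    unfolding P_def dirichlet_series_def zeta_real_def
    by (intro tendsto_mult summable_LIMSEQ summable_dirichlet_series summable_inverse_Suc_powr
        assms abs_moebius_mu_le)
  moreover have "(\<lambda>N. P N - 1) \<longlonglongrightarrow> 0"
  proof (rule Lim_null_comparison)
    show "\<forall>\<^sub>F N in sequentially. norm (P N - 1) \<le> Z^2 * real N powr (-\<delta>)"
      using eventually_ge_at_top[of "1::nat"]
    proof eventually_elim
      case (elim N)
      have "P N = (\<Sum>d=1..N. moebius_mu d / real d powr s) * (\<Sum>e=1..N. 1 / real e powr s)"
        unfolding P_def by (subst (1 2) sum_bounds_lt_plus1[symmetric]) (rule refl)
      thus ?case
        using moebius_zeta_partial_product_error[OF assms elim] by (simp add: Z_def \<delta>_def)
    qed
    show "(\<lambda>N. Z^2 * real N powr (-\<delta>)) \<longlonglongrightarrow> 0"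
      using assms by (intro tendsto_mult_right_zero tendsto_neg_powr filterlim_real_sequentially)
        (simp add: \<delta>_def)
  qed
  ultimately show ?thesis using LIMSEQ_unique by (blast dest: LIM_zero_cancel)
qed

lemma zeta_real_2: "zeta_real 2 = pi^2 / 6"
  using inverse_squares_sums by (simp add: zeta_real_def sums_iff)

lemma dirichlet_series_moebius_mu_2: "dirichlet_series moebius_mu 2 = 6 / pi^2"
  using dirichlet_series_moebius_mu_mult_zeta[of 2] by (simp add: zeta_real_2 field_simps)

text \<open>Differentiating \<open>(\<Sum> \<mu>(n) n\<^sup>-\<^sup>s) \<zeta>(s) = 1\<close> at \<open>s = 2\<close>.\<close>

lemma suminf_moebius_mu_ln:
  "(\<Sum>n. moebius_mu (Suc n) * ln (real (Suc n)) / real (Suc n) powr 2)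
     = deriv zeta_real 2 / (zeta_real 2)^2"
proof -
  define A where "A = (\<Sum>n. moebius_mu (Suc n) * ln (real (Suc n)) / real (Suc n) powr 2)"
  define Z' where "Z' = (\<Sum>n. 1 * ln (real (Suc n)) / real (Suc n) powr (2::real))"
  have dM: "(dirichlet_series moebius_mu has_field_derivative - A) (at 2)"
    unfolding A_def by (rule has_field_derivative_dirichlet_series) (auto simp: abs_moebius_mu_le)
  have dZ: "(zeta_real has_field_derivative - Z') (at 2)"
    unfolding Z'_def zeta_real_eq_dirichlet_series by (rule has_field_derivative_dirichlet_series) auto
  have "((\<lambda>s. dirichlet_series moebius_mu s * zeta_real s) has_field_derivative
          - A * zeta_real 2 + - Z' * dirichlet_series moebius_mu 2) (at 2)"
    by (rule DERIV_mult[OF dM dZ])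
  moreover have "((\<lambda>s. dirichlet_series moebius_mu s * zeta_real s) has_field_derivative 0) (at 2)"
    by (rule has_field_derivative_transform_within_open[OF DERIV_const[of 1] _ _, of "{1<..}"])
       (auto simp: dirichlet_series_moebius_mu_mult_zeta)
  ultimately have "- A * zeta_real 2 + - Z' * dirichlet_series moebius_mu 2 = 0"
    by (rule DERIV_unique)
  moreover have "deriv zeta_real 2 = - Z'" by (rule DERIV_imp_deriv[OF dZ])
  ultimately show ?thesis
    by (simp add: A_def zeta_real_2 dirichlet_series_moebius_mu_2 field_simps power2_eq_square)
qed

section \<open>Gaps of the Farey sequence\<close>

lemma finite_farey: "finite (farey Q)"
proof -
  have "farey Q \<subseteq> (\<lambda>(a, q). real a / real q) ` ({0..Q} \<times> {0..Q})"
    by (auto simp: farey_def image_iff intro!: bexI[of _ "(_, _)"])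
  thus ?thesis by (rule finite_subset) simp
qed

lemma farey_le_1: "x \<in> farey Q \<Longrightarrow> x \<le> 1"
  by (auto simp: farey_def divide_le_eq_1)

lemma set_farey_list: "set (farey_list Q) = farey Q"
  by (simp add: farey_list_def finite_farey)

lemma farey_list_nth_less:
  "i < j \<Longrightarrow> j < length (farey_list Q) \<Longrightarrow> farey_list Q ! i < farey_list Q ! j"
  unfolding farey_list_def by (rule sorted_wrt_nth_less[OF strict_sorted_list_of_set])

lemma coprime_if_unimodular:
  fixes a b q r :: nat
  assumes "b * q = a * r + 1"
  shows "coprime b r" "coprime q r"
proof -
  have unit: "is_unit c" if "c dvd b * q" "c dvd r" for c
  proof -
    have "c dvd a * r" "c dvd a * r + 1" using that assms by auto
    thus ?thesis by (metis dvd_add_right_iff)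
  qed
  show "coprime b r" "coprime q r" by (auto intro!: coprimeI unit)
qed

lemma unimodular_numerator_unique:
  fixes a a' b b' q r :: nat
  assumes "b * q = a * r + 1" "b' * q = a' * r + 1" "a < q" "a' < q"
  shows "a = a'"
proof -
  have "a = a'" if "b * q = a * r + 1" "b' * q = a' * r + 1" "a \<le> a'" "a' < q" for a a' b b' :: nat
  proof -
    have "(a' - a) * r = (b' - b) * q"
      using that by (simp add: diff_mult_distrib)
    hence "q dvd (a' - a) * r" by simp
    hence "q dvd a' - a" using coprime_if_unimodular(2)[OF that(1)] by (simp add: coprime_dvd_mult_left_iff)
    moreover have "a' - a < q" using that by simp
    ultimately show ?thesis using that(3) by (auto dest: dvd_imp_le)
  qed
  thus ?thesis using assms by (metis linorder_le_cases)
qed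

text \<open>The solutions \<open>r\<close> of \<open>a r \<equiv> -1 (mod q)\<close> form a progression of step \<open>q\<close>, so one lies in \<open>(Q - q, Q]\<close>.\<close>

lemma exists_unimodular_partner:
  fixes a q Q :: nat
  assumes "1 \<le> a" "a < q" "q \<le> Q" "coprime a q"
  obtains r where "1 \<le> r" "r \<le> Q" "Q < q + r" "q dvd a * r + 1"
proof -
  obtain x y where xy: "a * x = q * y + 1"
    using bezout_nat[of a q] assms by (auto simp: coprime_iff_gcd_eq_1)
  define r where "r = Q - (Q + x) mod q"
  have m: "(Q + x) mod q < q" using assms by simp
  have r: "1 \<le> r" "r \<le> Q" "Q < q + r" unfolding r_def using m assms(3) by linarith+
  have rx: "r + x = q * ((Q + x) div q)"
    using m assms(3) minus_mod_eq_mult_div[of "Q + x" q] by (simp add: r_def)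
  have "a * r + 1 + q * y = a * (r + x)" using xy by (simp add: algebra_simps)
  also have "\<dots> = q * (a * ((Q + x) div q))" by (simp add: rx)
  finally have "q dvd a * r + 1 + q * y" by simp
  hence "q dvd a * r + 1" by (metis dvd_add_left_iff dvd_triv_left)
  with r show ?thesis by (rule that)
qed

lemma unimodular_partner_in_farey:
  fixes a b q r Q :: nat
  assumes "b * q = a * r + 1" "a < q" "1 \<le> r" "r \<le> Q"
  shows "real b / real r \<in> farey Q" "real b / real r - real a / real q = 1 / (real q * real r)"
proof -
  have "a * r + 1 \<le> (q - 1) * r + r" using assms by (intro add_mono mult_right_mono) auto
  also have "\<dots> = r * q" using assms by (cases q) auto
  finally have "b * q \<le> r * q" using assms(1) by simp
  hence "b \<le> r" using assms(2) by (simp add: mult_le_cancel2)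
  moreover have "1 \<le> b" using assms(1) by (cases b) auto
  ultimately show "real b / real r \<in> farey Q"
    using assms coprime_if_unimodular(1)[OF assms(1)] unfolding farey_def by blast
  have "real b * real q = real a * real r + 1" using assms(1) by (metis of_nat_1 of_nat_add of_nat_mult)
  thus "real b / real r - real a / real q = 1 / (real q * real r)"
    using assms by (simp add: field_simps)
qed

lemma farey_list_Suc_le:
  assumes "Suc j < length (farey_list Q)" "x \<in> farey Q" "farey_list Q ! j < x"
  shows "farey_list Q ! Suc j \<le> x"
proof -
  obtain k where k: "k < length (farey_list Q)" "farey_list Q ! k = x"
    using assms(2) by (metis in_set_conv_nth set_farey_list)
  have "j < k"
  proof (rule ccontr)
    assume "\<not> j < k"
    hence "farey_list Q ! k \<le> farey_list Q ! j"
      using assms(1) farey_list_nth_less[of k j Q] by (cases "k = j") auto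
    thus False using k(2) assms(3) by simp
  qed
  thus ?thesis
    using k farey_list_nth_less[of "Suc j" k Q] by (cases "Suc j = k") auto
qed

text \<open>The partner \<open>b/r\<close> of \<open>a/q\<close> lies in \<open>F\<^sub>Q\<close> at distance \<open>1/(q r)\<close> to the right, which bounds the gap.\<close>

lemma farey_gap_le:
  assumes j: "Suc j < length (farey_list Q)"
  obtains a b q r where "farey_list Q ! j = real a / real q" "1 \<le> a" "a < q" "q \<le> Q"
    "1 \<le> r" "r \<le> Q" "Q < q + r" "b * q = a * r + 1"
    "farey_list Q ! Suc j - farey_list Q ! j \<le> 1 / (real q * real r)"
proof -
  define g where "g = farey_list Q"
  have "g ! j \<in> farey Q" using j by (metis g_def Suc_lessD nth_mem set_farey_list)
  then obtain a q where aq: "g ! j = real a / real q" "1 \<le> a" "a \<le> q" "q \<le> Q" "coprime a q"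
    by (auto simp: farey_def)
  have "g ! j < g ! Suc j" using j by (simp add: g_def farey_list_nth_less)
  moreover have "g ! Suc j \<le> 1" using j by (metis g_def nth_mem set_farey_list farey_le_1)
  ultimately have "a < q" using aq by (cases "a = q") auto
  then obtain r where r: "1 \<le> r" "r \<le> Q" "Q < q + r" "q dvd a * r + 1"
    using exists_unimodular_partner aq by blast
  define b where "b = (a * r + 1) div q"
  have bq: "b * q = a * r + 1" using r by (simp add: b_def)
  note partner = unimodular_partner_in_farey[OF bq \<open>a < q\<close> r(1,2)]
  have "0 < 1 / (real q * real r)" using \<open>a < q\<close> r(1) by simp
  hence "g ! j < real b / real r" using partner(2) aq(1) by linarith
  hence "g ! Suc j \<le> real b / real r"
    unfolding g_def by (rule farey_list_Suc_le[OF j partner(1)])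
  hence "g ! Suc j - g ! j \<le> 1 / (real q * real r)" using partner(2) aq(1) by simp
  with aq(1,2) \<open>a < q\<close> aq(4) r(1-3) bq show ?thesis by (rule that[folded g_def])
qed

section \<open>Sums over pairs of denominators\<close>

text \<open>Consecutive fractions of \<open>F\<^sub>m\<close> have coprime denominators \<open>q, r\<close> with \<open>q, r \<le> m < q + r\<close>.\<close>

definition denom_pairs :: "nat \<Rightarrow> (nat \<times> nat) set" where
  "denom_pairs m = {(q, r). 1 \<le> q \<and> q \<le> m \<and> 1 \<le> r \<and> r \<le> m \<and> m < q + r}"

definition inv_sq_prod :: "nat \<times> nat \<Rightarrow> real" where
  "inv_sq_prod p = 1 / (real (fst p) * real (snd p))^2"

definition pair_sum :: "nat \<Rightarrow> real" where
  "pair_sum m = sum inv_sq_prod (denom_pairs m)"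

definition coprime_pair_sum :: "nat \<Rightarrow> real" where
  "coprime_pair_sum Q = sum inv_sq_prod {p \<in> denom_pairs Q. coprime (fst p) (snd p)}"

lemma finite_denom_pairs: "finite (denom_pairs m)"
  by (rule finite_subset[of _ "{1..m} \<times> {1..m}"]) (auto simp: denom_pairs_def)

lemma pair_sum_nonneg: "pair_sum m \<ge> 0"
  unfolding pair_sum_def inv_sq_prod_def by (intro sum_nonneg) auto

text \<open>A pair attached to the \<open>j\<close>-th gap determines the gap: through \<open>b q = a r + 1\<close> it fixes the
  left end \<open>a/q\<close>.\<close>

definition farey_gap_pair :: "nat \<Rightarrow> nat \<Rightarrow> nat \<times> nat \<Rightarrow> bool" where
  "farey_gap_pair Q j p \<longleftrightarrow> p \<in> denom_pairs Q \<and> coprime (fst p) (snd p) \<and> p \<noteq> (1, Q) \<and>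
     (\<exists>a b. farey_list Q ! j = real a / real (fst p) \<and> a < fst p \<and> b * fst p = a * snd p + 1) \<and>
     (farey_list Q ! Suc j - farey_list Q ! j)^2 \<le> inv_sq_prod p"

lemma farey_gap_pair_exists:
  assumes "Suc j < length (farey_list Q)"
  shows "\<exists>p. farey_gap_pair Q j p"
proof -
  obtain a b q r where *: "farey_list Q ! j = real a / real q" "1 \<le> a" "a < q" "q \<le> Q"
    "1 \<le> r" "r \<le> Q" "Q < q + r" "b * q = a * r + 1"
    "farey_list Q ! Suc j - farey_list Q ! j \<le> 1 / (real q * real r)"
    using assms by (rule farey_gap_le)
  have "0 \<le> farey_list Q ! Suc j - farey_list Q ! j"
    using assms farey_list_nth_less[of j "Suc j" Q] by simp
  hence "(farey_list Q ! Suc j - farey_list Q ! j)^2 \<le> (1 / (real q * real r))^2"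
    by (rule power_mono[OF *(9)])
  hence "farey_gap_pair Q j (q, r)"
    using * coprime_if_unimodular(2)[OF *(8)]
    by (auto simp: farey_gap_pair_def denom_pairs_def inv_sq_prod_def power_divide)
  thus ?thesis ..
qed

lemma farey_gap_pair_index_unique:
  assumes "farey_gap_pair Q j p" "farey_gap_pair Q k p" "j < length (farey_list Q)" "k < length (farey_list Q)"
  shows "j = k"
proof -
  obtain a b a' b' where
    "farey_list Q ! j = real a / real (fst p)" "a < fst p" "b * fst p = a * snd p + 1"
    "farey_list Q ! k = real a' / real (fst p)" "a' < fst p" "b' * fst p = a' * snd p + 1"
    using assms(1,2) unfolding farey_gap_pair_def by blast
  hence "farey_list Q ! j = farey_list Q ! k" using unimodular_numerator_unique by metis
  thus ?thesis using assms(3,4) farey_list_nth_less by (metis linorder_neqE_nat less_irrefl)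
qed

lemma S2_le_coprime_pair_sum:
  assumes "Q \<ge> 1"
  shows "S2 Q \<le> coprime_pair_sum Q - 1 / real Q ^ 2"
proof -
  define g where "g = farey_list Q"
  define J where "J = {..<length g - 1}"
  define P where "P = {p \<in> denom_pairs Q. coprime (fst p) (snd p)} - {(1, Q)}"
  have "\<forall>j\<in>J. \<exists>p. farey_gap_pair Q j p" using farey_gap_pair_exists by (simp add: J_def g_def)
  from bchoice[OF this] obtain \<phi> where \<phi>: "\<And>j. j \<in> J \<Longrightarrow> farey_gap_pair Q j (\<phi> j)" by blast
  have "inj_on \<phi> J"
  proof (rule inj_onI)
    fix j k assume jk: "j \<in> J" "k \<in> J" "\<phi> j = \<phi> k"
    hence "farey_gap_pair Q j (\<phi> j)" "farey_gap_pair Q k (\<phi> j)" using \<phi>[of j] \<phi>[of k] by simp_all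
    moreover have "j < length g" "k < length g" using jk by (auto simp: J_def)
    ultimately show "j = k" unfolding g_def by (rule farey_gap_pair_index_unique)
  qed
  have "S2 Q = (\<Sum>j\<in>J. (g ! (j + 1) - g ! j)^2)" by (simp add: S2_def g_def J_def Let_def)
  also have "\<dots> \<le> (\<Sum>j\<in>J. inv_sq_prod (\<phi> j))"
    using \<phi> by (intro sum_mono) (simp add: farey_gap_pair_def g_def)
  also have "\<dots> = (\<Sum>p\<in>\<phi> ` J. inv_sq_prod p)" using \<open>inj_on \<phi> J\<close> by (simp add: sum.reindex)
  also have "\<dots> \<le> (\<Sum>p\<in>P. inv_sq_prod p)"
  proof (rule sum_mono2)
    show "finite P" using finite_denom_pairs by (simp add: P_def)
    show "\<phi> ` J \<subseteq> P"
    proof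
      fix p assume "p \<in> \<phi> ` J"
      then obtain j where "j \<in> J" "p = \<phi> j" by blast
      thus "p \<in> P" using \<phi>[of j] by (simp add: farey_gap_pair_def P_def)
    qed
  qed (simp add: inv_sq_prod_def)
  also have "\<dots> = coprime_pair_sum Q - inv_sq_prod (1, Q)"
    using assms finite_denom_pairs
    by (simp add: P_def coprime_pair_sum_def sum_diff1 denom_pairs_def)
  finally show ?thesis by (simp add: inv_sq_prod_def)
qed

lemma sum_inv_sq_prod_common_divisor:
  assumes "d \<ge> 1"
  shows "(\<Sum>p\<in>{p \<in> denom_pairs Q. d dvd fst p \<and> d dvd snd p}. inv_sq_prod p) = pair_sum (Q div d) / real d ^ 4"
proof -
  have "(\<Sum>p\<in>{p \<in> denom_pairs Q. d dvd fst p \<and> d dvd snd p}. inv_sq_prod p)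
      = (\<Sum>p\<in>denom_pairs (Q div d). inv_sq_prod p / real d ^ 4)"
  proof (rule sum.reindex_bij_witness[where i = "\<lambda>(q, r). (d * q, d * r)" and j = "\<lambda>(q, r). (q div d, r div d)"])
    fix p assume "p \<in> {p \<in> denom_pairs Q. d dvd fst p \<and> d dvd snd p}"
    then obtain q r where p: "p = (d * q, d * r)" "1 \<le> d * q" "d * q \<le> Q" "1 \<le> d * r" "d * r \<le> Q"
      "Q < d * q + d * r"
      by (auto simp: denom_pairs_def elim!: dvdE)
    have "q \<noteq> 0" "r \<noteq> 0" using p(2,4) by auto
    have "q \<le> Q div d" "r \<le> Q div d" "Q div d < q + r"
      using p assms by (auto simp: less_eq_div_iff_mult_less_eq div_less_iff_less_mult algebra_simps)
    thus "(case case p of (q, r) \<Rightarrow> (q div d, r div d) of (q, r) \<Rightarrow> (d * q, d * r)) = p"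
      "(case p of (q, r) \<Rightarrow> (q div d, r div d)) \<in> denom_pairs (Q div d)"
      "inv_sq_prod (case p of (q, r) \<Rightarrow> (q div d, r div d)) / real d ^ 4 = inv_sq_prod p"
      using p assms \<open>q \<noteq> 0\<close> \<open>r \<noteq> 0\<close>
      by (auto simp: denom_pairs_def inv_sq_prod_def power_mult_distrib field_simps)
  next
    fix p assume "p \<in> denom_pairs (Q div d)"
    then obtain q r where p: "p = (q, r)" "1 \<le> q" "q \<le> Q div d" "1 \<le> r" "r \<le> Q div d" "Q div d < q + r"
      by (auto simp: denom_pairs_def)
    have "1 \<le> d * q" "1 \<le> d * r" using p(2,4) assms by simp_all
    moreover have "d * q \<le> Q" "d * r \<le> Q" "Q < d * q + d * r"
      using p assms by (auto simp: less_eq_div_iff_mult_less_eq div_less_iff_less_mult algebra_simps)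
    ultimately show "(case case p of (q, r) \<Rightarrow> (d * q, d * r) of (q, r) \<Rightarrow> (q div d, r div d)) = p"
      "(case p of (q, r) \<Rightarrow> (d * q, d * r)) \<in> {p \<in> denom_pairs Q. d dvd fst p \<and> d dvd snd p}"
      using p by (auto simp: denom_pairs_def)
  qed
  thus ?thesis by (simp add: pair_sum_def sum_divide_distrib)
qed

lemma coprime_pair_sum_moebius:
  "coprime_pair_sum Q = (\<Sum>d=1..Q. moebius_mu d / real d ^ 4 * pair_sum (Q div d))"
proof -
  have "coprime_pair_sum Q = (\<Sum>p\<in>denom_pairs Q. if coprime (fst p) (snd p) then inv_sq_prod p else 0)"
    unfolding coprime_pair_sum_def using finite_denom_pairs by (subst sum.inter_filter) auto
  also have "\<dots> = (\<Sum>p\<in>denom_pairs Q. \<Sum>d=1..Q.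
      if d dvd fst p \<and> d dvd snd p then moebius_mu d * inv_sq_prod p else 0)"
  proof (intro sum.cong refl)
    fix p assume "p \<in> denom_pairs Q"
    then obtain q r where qr: "p = (q, r)" "1 \<le> q" "q \<le> Q" "1 \<le> r" by (auto simp: denom_pairs_def)
    text \<open>Detect coprimality by \<open>\<Sum>\<^bsub>d | gcd(q, r)\<^esub> \<mu>(d)\<close>.\<close>
    have "{d. d dvd gcd q r} = {d \<in> {1..Q}. d dvd q \<and> d dvd r}"
      using qr by (auto intro: Nat.gr0I order_trans[OF dvd_imp_le])
    moreover have "gcd q r > 0" using qr by simp
    ultimately have "(if coprime q r then inv_sq_prod p else 0)
        = (\<Sum>d\<in>{d \<in> {1..Q}. d dvd q \<and> d dvd r}. moebius_mu d * inv_sq_prod p)"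
      by (metis sum_moebius_mu_divisors coprime_iff_gcd_eq_1 sum_distrib_right mult_1 mult_zero_left)
    thus "(if coprime (fst p) (snd p) then inv_sq_prod p else 0)
        = (\<Sum>d=1..Q. if d dvd fst p \<and> d dvd snd p then moebius_mu d * inv_sq_prod p else 0)"
      using qr by (subst sum.inter_filter[symmetric]) simp_all
  qed
  also have "\<dots> = (\<Sum>d=1..Q. \<Sum>p\<in>denom_pairs Q.
      if d dvd fst p \<and> d dvd snd p then moebius_mu d * inv_sq_prod p else 0)"
    by (rule sum.swap)
  also have "\<dots> = (\<Sum>d=1..Q. moebius_mu d *
      (\<Sum>p\<in>{p \<in> denom_pairs Q. d dvd fst p \<and> d dvd snd p}. inv_sq_prod p))"
    using finite_denom_pairs by (simp add: sum.inter_filter sum_distrib_left if_distrib cong: if_cong)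
  also have "\<dots> = (\<Sum>d=1..Q. moebius_mu d / real d ^ 4 * pair_sum (Q div d))"
    by (intro sum.cong refl) (simp add: sum_inv_sq_prod_common_divisor)
  finally show ?thesis .
qed

lemma pair_sum_eq_rows: "pair_sum m = (\<Sum>q=1..m. 1 / real q ^ 2 * (\<Sum>k<q. 1 / real (m - k) ^ 2))"
proof -
  have "(\<Sum>q=1..m. \<Sum>k<q. 1 / (real q ^ 2 * real (m - k) ^ 2))
      = (\<Sum>(q, k)\<in>Sigma {1..m} (\<lambda>q. {..<q}). 1 / (real q ^ 2 * real (m - k) ^ 2))"
    by (rule sum.Sigma) auto
  also have "\<dots> = (\<Sum>p\<in>denom_pairs m. inv_sq_prod p)"
  proof (rule sum.reindex_bij_witness[where i = "\<lambda>(q, r). (q, m - r)" and j = "\<lambda>(q, k). (q, m - k)"])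
    fix p assume "p \<in> Sigma {1..m} (\<lambda>q. {..<q})"
    thus "(case case p of (q, k) \<Rightarrow> (q, m - k) of (q, r) \<Rightarrow> (q, m - r)) = p"
      "(case p of (q, k) \<Rightarrow> (q, m - k)) \<in> denom_pairs m"
      "inv_sq_prod (case p of (q, k) \<Rightarrow> (q, m - k)) = (case p of (q, k) \<Rightarrow> 1 / (real q ^ 2 * real (m - k) ^ 2))"
      by (auto simp: denom_pairs_def inv_sq_prod_def power_mult_distrib)
  next
    fix p assume "p \<in> denom_pairs m"
    thus "(case case p of (q, r) \<Rightarrow> (q, m - r) of (q, k) \<Rightarrow> (q, m - k)) = p"
      "(case p of (q, r) \<Rightarrow> (q, m - r)) \<in> Sigma {1..m} (\<lambda>q. {..<q})"
      by (auto simp: denom_pairs_def)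
  qed
  finally show ?thesis by (simp add: pair_sum_def sum_distrib_left)
qed

section \<open>Asymptotics of the pair sum\<close>

text \<open>Two telescoping brackets for \<open>1/x\<^sup>2\<close>; the shifts \<open>1/2\<close> and \<open>1/3\<close> produce the constants \<open>3/2\<close> and \<open>7/10\<close> below.\<close>

lemma inverse_square_le_telescope:
  fixes x :: real
  assumes "x > 1/2"
  shows "1 / x^2 \<le> 1 / (x - 1/2) - 1 / (x + 1/2)"
proof -
  have "1 / (x - 1/2) - 1 / (x + 1/2) = 1 / ((x - 1/2) * (x + 1/2))"
    using assms by (simp add: field_simps)
  moreover have "(x - 1/2) * (x + 1/2) \<le> x^2" by (simp add: power2_eq_square algebra_simps)
  ultimately show ?thesis using assms by (simp add: frac_le)
qed

lemma telescope_le_inverse_square: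
  fixes x :: real
  assumes "x \<ge> 2/3"
  shows "1 / (x - 1/3) - 1 / (x + 2/3) \<le> 1 / x^2"
proof -
  have "1 / (x - 1/3) - 1 / (x + 2/3) = 1 / ((x - 1/3) * (x + 2/3))"
    using assms by (simp add: field_simps)
  moreover have "x^2 \<le> (x - 1/3) * (x + 2/3)" using assms by (simp add: power2_eq_square algebra_simps)
  ultimately show ?thesis using assms by (simp add: frac_le)
qed

lemma sum_inverse_squares_top_le:
  assumes "q \<le> m"
  shows "(\<Sum>k<q. 1 / real (m - k) ^ 2) \<le> 1 / (real m - real q + 1/2) - 1 / (real m + 1/2)"
  using assms
proof (induction q)
  case (Suc q)
  have "1 / real (m - q) ^ 2 \<le> 1 / (real m - real q - 1/2) - 1 / (real m - real q + 1/2)"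
    using inverse_square_le_telescope[of "real m - real q"] Suc.prems by (simp add: of_nat_diff)
  thus ?case using Suc by simp
qed simp

lemma sum_inverse_squares_top_ge:
  assumes "q \<le> m"
  shows "(\<Sum>k<q. 1 / real (m - k) ^ 2) \<ge> 1 / (real m - real q + 2/3) - 1 / (real m + 2/3)"
  using assms
proof (induction q)
  case (Suc q)
  have "1 / (real m - real q - 1/3) - 1 / (real m - real q + 2/3) \<le> 1 / real (m - q) ^ 2"
    using telescope_le_inverse_square[of "real m - real q"] Suc.prems by (simp add: of_nat_diff)
  thus ?case using Suc by simp
qed simp

lemma sum_telescoped_rows:
  fixes \<alpha> :: real
  assumes "\<alpha> > 0"
  shows "(\<Sum>q=1..m. 1 / real q ^ 2 * (1 / (real m + \<alpha> - real q) - 1 / (real m + \<alpha>)))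
           = (harm m + (\<Sum>k=1..m. 1 / (real k - 1 + \<alpha>))) / (real m + \<alpha>)^2"
proof -
  define M where "M = real m + \<alpha>"
  have "(\<Sum>q=1..m. 1 / real q ^ 2 * (1 / (M - real q) - 1 / M))
      = (\<Sum>q=1..m. (1 / real q + 1 / (M - real q)) / M^2)"
  proof (intro sum.cong refl)
    fix q assume "q \<in> {1..m}"
    hence "real q > 0" "M - real q > 0" "M > 0" using assms by (auto simp: M_def)
    thus "1 / real q ^ 2 * (1 / (M - real q) - 1 / M) = (1 / real q + 1 / (M - real q)) / M^2"
      by (simp add: field_simps power2_eq_square)
  qed
  also have "\<dots> = (harm m + (\<Sum>q=1..m. 1 / (M - real q))) / M^2"
    by (simp add: sum_divide_distrib[symmetric] sum.distrib harm_def inverse_eq_divide)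
  also have "(\<Sum>q=1..m. 1 / (M - real q)) = (\<Sum>k=1..m. 1 / (M - real (m + 1 - k)))"
    by (rule sum.atLeastAtMost_rev)
  also have "\<dots> = (\<Sum>k=1..m. 1 / (real k - 1 + \<alpha>))"
    by (intro sum.cong refl) (auto simp: M_def of_nat_diff)
  finally show ?thesis by (simp add: M_def)
qed

lemma sum_half_shift_excess_le:
  "m \<ge> 1 \<Longrightarrow> (\<Sum>k=1..m. 1 / (real k - 1/2) - 1 / real k) \<le> 3/2 - 1 / (2 * real m)"
proof (induction m rule: nat_induct_at_least)
  case (Suc n)
  define x where "x = real n"
  have x: "x \<ge> 1" using Suc by (simp add: x_def)
  have "1 / (x + 1/2) - 1 / (x + 1) = 1 / ((2 * x + 1) * (x + 1))"
    using x by (simp add: field_simps)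
  also have "\<dots> \<le> 1 / ((2 * x) * (x + 1))"
    using x by (intro divide_left_mono mult_right_mono mult_pos_pos) auto
  also have "\<dots> = 1 / (2 * x) - 1 / (2 * (x + 1))"
    using x by (simp add: field_simps)
  finally show ?case using Suc.IH by (simp add: x_def algebra_simps)
qed simp

lemma sum_third_shift_excess_ge:
  "m \<ge> 1 \<Longrightarrow> (\<Sum>k=1..m. 1 / (real k - 1/3) - 1 / real k) \<ge> 7/10 - 1 / (3 * real m + 2)"
proof (induction m rule: nat_induct_at_least)
  case (Suc n)
  define x where "x = real n"
  have x: "x \<ge> 1" using Suc by (simp add: x_def)
  have thirds: "3 / (3 * x + 2) = 1 / (x + 2/3)" "3 / (3 * x + 3) = 1 / (x + 1)"
    using x by (simp_all add: field_simps)
  have "1 / (3 * x + 2) - 1 / (3 * x + 5) = 3 / ((3 * x + 2) * (3 * x + 5))"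
    using x by (simp add: field_simps)
  also have "\<dots> \<le> 3 / ((3 * x + 2) * (3 * x + 3))"
    using x by (intro divide_left_mono mult_left_mono mult_pos_pos) auto
  also have "\<dots> = 3 / (3 * x + 2) - 3 / (3 * x + 3)"
    using x by (simp add: field_simps)
  also have "\<dots> = 1 / (x + 2/3) - 1 / (x + 1)" by (simp only: thirds)
  finally show ?case using Suc.IH by (simp add: x_def algebra_simps)
qed simp

lemma pair_sum_upper:
  assumes "m \<ge> 1"
  shows "(real m + 1/2)^2 * pair_sum m \<le> 2 * harm m + 3/2"
proof -
  have "pair_sum m \<le> (\<Sum>q=1..m. 1 / real q ^ 2 * (1 / (real m + 1/2 - real q) - 1 / (real m + 1/2)))"
    unfolding pair_sum_eq_rows using sum_inverse_squares_top_le
    by (intro sum_mono mult_left_mono) (auto simp: algebra_simps)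
  also have "\<dots> = (harm m + (\<Sum>k=1..m. 1 / (real k - 1/2))) / (real m + 1/2)^2"
    using sum_telescoped_rows[of "1/2" m] by simp
  also have "(\<Sum>k=1..m. 1 / (real k - 1/2)) = harm m + (\<Sum>k=1..m. 1 / (real k - 1/2) - 1 / real k)"
    by (simp add: harm_def inverse_eq_divide sum_subtractf)
  also have "\<dots> \<le> harm m + 3/2"
    using sum_half_shift_excess_le[OF assms] divide_nonneg_nonneg[of 1 "2 * real m"] by linarith
  finally show ?thesis by (simp add: field_simps)
qed

lemma pair_sum_lower:
  assumes "m \<ge> 1"
  shows "(real m + 2/3)^2 * pair_sum m \<ge> 2 * harm m + 7/10 - 1 / (3 * real m + 2)"
proof -
  have "harm m + (7/10 - 1 / (3 * real m + 2)) \<le> harm m + (\<Sum>k=1..m. 1 / (real k - 1/3) - 1 / real k)"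
    using sum_third_shift_excess_ge[OF assms] by simp
  also have "\<dots> = (\<Sum>k=1..m. 1 / (real k - 1 + 2/3))"
    by (simp add: harm_def inverse_eq_divide sum_subtractf)
  finally have "(2 * harm m + 7/10 - 1 / (3 * real m + 2)) / (real m + 2/3)^2
      \<le> (harm m + (\<Sum>k=1..m. 1 / (real k - 1 + 2/3))) / (real m + 2/3)^2"
    by (intro divide_right_mono) (simp_all add: algebra_simps)
  also have "\<dots> = (\<Sum>q=1..m. 1 / real q ^ 2 * (1 / (real m + 2/3 - real q) - 1 / (real m + 2/3)))"
    using sum_telescoped_rows[of "2/3" m] by simp
  also have "\<dots> \<le> pair_sum m"
    unfolding pair_sum_eq_rows using sum_inverse_squares_top_ge
    by (intro sum_mono mult_left_mono) (auto simp: algebra_simps)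
  finally show ?thesis by (simp add: pos_divide_le_eq mult.commute add_pos_nonneg)
qed

lemma ln_plus_euler_mascheroni_le_harm:
  assumes "m \<ge> 1" shows "ln (real m) + euler_mascheroni \<le> (harm m :: real)"
proof -
  have "euler_mascheroni \<le> harm m - ln (real m)"
    using assms by (intro LIMSEQ_le_const2[OF euler_mascheroni_LIMSEQ] exI[of _ m] allI impI
        euler_mascheroni_sequence_decreasing) auto
  thus ?thesis by simp
qed

lemma harm_le_ln_Suc_plus_euler_mascheroni:
  assumes "m \<ge> 1" shows "(harm m :: real) \<le> ln (real m + 1) + euler_mascheroni"
proof -
  have "harm m - ln (real m + 1) + inverse (real (2 * (m + 1))) \<le> (euler_mascheroni :: real)"
    using euler_mascheroni_bounds[OF assms] by (simp add: add.commute)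
  moreover have "inverse (real (2 * (m + 1))) \<ge> 0" by simp
  ultimately show ?thesis by linarith
qed

lemma euler_mascheroni_bounds_numeral: "23/40 < (euler_mascheroni :: real)" "(euler_mascheroni :: real) < 3/5"
  using euler_mascheroni_gt_19_over_33 euler_mascheroni_less_13_over_22 by simp_all

text \<open>Below, \<open>y\<close> stands for \<open>Q/d\<close> and \<open>m = \<lfloor>Q/d\<rfloor>\<close>.\<close>

lemma ln_near_floor:
  fixes y :: real
  assumes "m \<ge> 1" "real m \<le> y" "y < real m + 1"
  shows "ln (real m + 1) \<le> ln y + 1 / y" "ln y \<le> ln (real m) + 2 / y"
proof -
  have "y > 0" "real m > 0" using assms by auto
  have "ln ((real m + 1) / y) \<le> (real m + 1) / y - 1" using \<open>y > 0\<close> by (intro ln_le_minus_one) auto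
  also have "\<dots> \<le> 1 / y" using assms \<open>y > 0\<close> by (simp add: field_simps)
  finally show "ln (real m + 1) \<le> ln y + 1 / y" using \<open>y > 0\<close> by (simp add: ln_div)
  have "ln (y / real m) \<le> y / real m - 1" using \<open>y > 0\<close> \<open>real m > 0\<close> by (intro ln_le_minus_one) auto
  also have "\<dots> = (y - real m) / real m" using \<open>real m > 0\<close> by (simp add: field_simps)
  also have "\<dots> \<le> 1 / real m" using assms by (intro divide_right_mono) auto
  also have "\<dots> = 2 / (2 * real m)" by simp
  also have "\<dots> \<le> 2 / y" using assms \<open>y > 0\<close> by (intro divide_left_mono) auto
  finally show "ln y \<le> ln (real m) + 2 / y" using \<open>y > 0\<close> \<open>real m > 0\<close> by (simp add: ln_div)
qed

lemma pair_sum_asymp_upper: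
  fixes y :: real
  assumes m: "m \<ge> 1" and y: "real m \<le> y" "y < real m + 1"
  shows "y^2 * pair_sum m \<le> 2 * ln y + 2 * euler_mascheroni + 3/2 + (6 * ln y + 16) / y"
proof -
  define M where "M = real m + 1/2"
  have y1: "y \<ge> 1" and M: "M \<ge> 3/2" "y < M + 1/2" using m y by (auto simp: M_def)
  define X where "X = 2 * ln y + 2 / y + 2 * euler_mascheroni + 3/2"
  have "M^2 * pair_sum m \<le> X"
    using pair_sum_upper[OF m] harm_le_ln_Suc_plus_euler_mascheroni[OF m] ln_near_floor[OF m y]
    by (simp add: M_def X_def)
  moreover have "y^2 / M^2 \<le> 1 + 7 / (3 * y)"
  proof -
    have "y^2 - M^2 = (y - M) * (y + M)" by (simp add: power2_eq_square algebra_simps)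
    also have "\<dots> \<le> 1/2 * (y + M)" using M y1 by (intro mult_right_mono) auto
    finally have "y^2 \<le> M^2 + (y + M) / 2" by linarith
    also have "\<dots> \<le> M^2 + 7/6 * M" using M by simp
    finally have "y^2 / M^2 \<le> (M^2 + 7/6 * M) / M^2" using M by (intro divide_right_mono) auto
    also have "\<dots> = 1 + 7 / (6 * M)" using M by (simp add: field_simps power2_eq_square)
    also have "7 / (6 * M) \<le> 7 / (3 * y)" using M y1 by (intro divide_left_mono) auto
    finally show ?thesis by simp
  qed
  moreover have "0 < 2 / y" "2 / y \<le> 2" using y1 by (auto simp: divide_le_eq)
  hence "0 \<le> X" "X \<le> 2 * ln y + 47/10"
    using ln_ge_zero[OF y1] euler_mascheroni_bounds_numeral by (simp_all add: X_def)
  ultimately have "y^2 / M^2 * (M^2 * pair_sum m) \<le> (1 + 7 / (3 * y)) * X"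
    using pair_sum_nonneg[of m] y1 by (intro mult_mono) auto
  moreover have "y^2 * pair_sum m = y^2 / M^2 * (M^2 * pair_sum m)" using M by simp
  ultimately have "y^2 * pair_sum m \<le> X + 7 / (3 * y) * X" by (simp add: algebra_simps)
  also have "\<dots> \<le> X + 7 / (3 * y) * (2 * ln y + 47/10)"
    using \<open>X \<le> _\<close> y1 by (intro add_left_mono mult_left_mono) auto
  also have "\<dots> = 2 * ln y + 2 * euler_mascheroni + 3/2 + (14/3 * ln y + 2 + 329/30) / y"
    using y1 by (simp add: X_def field_simps)
  also have "\<dots> \<le> 2 * ln y + 2 * euler_mascheroni + 3/2 + (6 * ln y + 16) / y"
    using y1 ln_ge_zero[OF y1] by (intro add_left_mono divide_right_mono; linarith)
  finally show ?thesis .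
qed

lemma pair_sum_asymp_lower:
  fixes y :: real
  assumes m: "m \<ge> 1" and y: "real m \<le> y" "y < real m + 1"
  shows "y^2 * pair_sum m \<ge> 2 * ln y + 2 * euler_mascheroni + 7/10 - (6 * ln y + 16) / y"
proof -
  define N where "N = real m + 2/3"
  have y1: "y \<ge> 1" and N: "N \<ge> 5/3" "y \<le> 2 * N" "N - 2/3 \<le> y" using m y by (auto simp: N_def)
  define Y where "Y = 2 * harm m + 7/10 - 1 / (3 * real m + 2)"
  have "0 \<le> 1 / (3 * real m + 2)" "1 / (3 * real m + 2) \<le> 1 / y" "1 / (3 * real m + 2) \<le> 1/5"
    "1 / y \<le> 1" "2 / y = 2 * (1 / y)" "5 / y = 5 * (1 / y)"
    using m y y1 by (auto intro!: divide_left_mono)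
  hence Y: "Y \<ge> 2 * ln y + 2 * euler_mascheroni + 7/10 - 5 / y" "0 \<le> Y" "Y \<le> 2 * ln y + 39/10"
    using ln_plus_euler_mascheroni_le_harm[OF m] harm_le_ln_Suc_plus_euler_mascheroni[OF m]
      ln_near_floor[OF m y] euler_mascheroni_bounds_numeral ln_ge_zero[of "real m"] m
    unfolding Y_def by linarith+
  have "y^2 / N^2 \<ge> 1 - 8 / (3 * y)"
  proof -
    have "1 - 8 / (3 * y) \<le> 1 - 2 * (2 / (3 * N))" using N y1 by (simp add: field_simps)
    also have "\<dots> \<le> (1 - 2 / (3 * N))^2" by (simp add: power2_eq_square algebra_simps)
    also have "\<dots> \<le> (y / N)^2"
    proof (rule power_mono)
      have "1 - 2 / (3 * N) = (N - 2/3) / N" using N by (simp add: field_simps)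
      also have "\<dots> \<le> y / N" using N by (intro divide_right_mono) auto
      finally show "1 - 2 / (3 * N) \<le> y / N" .
      show "0 \<le> 1 - 2 / (3 * N)" using N by (simp add: field_simps)
    qed
    finally show ?thesis by (simp add: power_divide)
  qed
  hence "(1 - 8 / (3 * y)) * Y \<le> y^2 / N^2 * (N^2 * pair_sum m)"
    using pair_sum_lower[OF m] Y(2) by (intro mult_mono) (auto simp: N_def Y_def)
  also have "\<dots> = y^2 * pair_sum m" using N by simp
  finally have "Y - 8 / (3 * y) * Y \<le> y^2 * pair_sum m" by (simp add: algebra_simps)
  moreover have "8 / (3 * y) * Y \<le> 8 / (3 * y) * (2 * ln y + 39/10)"
    using Y(3) y1 by (intro mult_left_mono) auto
  moreover have "8 / (3 * y) * (2 * ln y + 39/10) + 5 / y \<le> (6 * ln y + 16) / y"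
    using y1 ln_ge_zero[OF y1] by (simp add: field_simps)
  ultimately show ?thesis using Y(1) by linarith
qed

text \<open>\<open>11/10\<close> is the midpoint of the constants \<open>3/2\<close> and \<open>7/10\<close> of the two bounds.\<close>

lemma abs_pair_sum_asymp:
  fixes y :: real
  assumes "m \<ge> 1" "real m \<le> y" "y < real m + 1"
  shows "\<bar>y^2 * pair_sum m - (2 * ln y + 2 * euler_mascheroni + 11/10)\<bar> \<le> 2/5 + (6 * ln y + 16) / y"
  using pair_sum_asymp_upper[OF assms] pair_sum_asymp_lower[OF assms] by (simp add: abs_le_iff)

section \<open>Sums against the Moebius function\<close>

lemma sum_inverse_squares_le: "(\<Sum>d=1..n. 1 / real d ^ 2) \<le> pi^2 / 6"
proof -
  have S: "(\<lambda>k. 1 / real (Suc k) ^ 2) sums (pi^2 / 6)"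
    using inverse_squares_sums by (simp add: add.commute)
  have "(\<Sum>d=1..n. 1 / real d ^ 2) = (\<Sum>k<n. 1 / real (Suc k) ^ 2)"
    by (subst sum_bounds_lt_plus1[symmetric]) (rule refl)
  also have "\<dots> \<le> (\<Sum>k. 1 / real (Suc k) ^ 2)"
    using S by (intro sum_le_suminf) (auto simp: sums_iff)
  finally show ?thesis using S by (simp add: sums_iff)
qed

lemma moebius_weighted_series_sums:
  assumes "Q > 0"
  shows "(\<lambda>n. moebius_mu (Suc n) / real (Suc n) ^ 2 * (2 * ln (real Q / real (Suc n)) + c)) sums
           ((2 * ln (real Q) + c) * (6 / pi^2) - 2 * (deriv zeta_real 2 / (zeta_real 2)^2))"
proof -
  define a where "a = (\<lambda>n. moebius_mu (Suc n) / real (Suc n) powr 2)"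
  define b where "b = (\<lambda>n. moebius_mu (Suc n) * ln (real (Suc n)) / real (Suc n) powr 2)"
  have "summable a" "summable b" unfolding a_def b_def
    by (rule summable_dirichlet_series summable_dirichlet_series_deriv; simp add: abs_moebius_mu_le)+
  hence "a sums (6 / pi^2)" "b sums (deriv zeta_real 2 / (zeta_real 2)^2)"
    using dirichlet_series_moebius_mu_2 suminf_moebius_mu_ln
    by (simp_all add: summable_sums_iff a_def b_def dirichlet_series_def)
  hence "(\<lambda>n. (2 * ln (real Q) + c) * a n - 2 * b n) sums
      ((2 * ln (real Q) + c) * (6 / pi^2) - 2 * (deriv zeta_real 2 / (zeta_real 2)^2))"
    by (intro sums_diff sums_mult)
  moreover have "(2 * ln (real Q) + c) * a n - 2 * b n
      = moebius_mu (Suc n) / real (Suc n) ^ 2 * (2 * ln (real Q / real (Suc n)) + c)" for n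
    using assms by (simp add: a_def b_def ln_div powr_numeral algebra_simps)
  ultimately show ?thesis by simp
qed

lemma inverse_Suc_square_le_telescope:
  fixes D :: real
  assumes "D > 0"
  shows "1 / (D + 1)^2 \<le> 1 / D - 1 / (D + 1)"
proof -
  have "1 / D - 1 / (D + 1) = 1 / (D * (D + 1))" using assms by (simp add: field_simps)
  moreover have "D * (D + 1) \<le> (D + 1)^2" using assms by (simp add: power2_eq_square)
  ultimately show ?thesis using assms by (simp add: frac_le)
qed

text \<open>The majorant is the difference quotient of \<open>t \<mapsto> (ln (t/Q) + 2)/t\<close>, whose derivative is
  \<open>-(ln (t/Q) + 1)/t\<^sup>2\<close>.\<close>

lemma ln_over_square_le_telescope:
  fixes D Q :: real
  assumes "Q > 0" "D \<ge> Q" "D \<ge> 1"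
  shows "ln ((D + 1) / Q) / (D + 1)^2 \<le> (ln (D / Q) + 2) / D - (ln ((D + 1) / Q) + 2) / (D + 1)"
proof -
  define E where "E = D + 1"
  define u where "u = ln (E / Q)"
  define \<delta> where "\<delta> = ln (E / D)"
  have D: "D > 0" "E > 0" "E \<le> 2 * D" using assms by (auto simp: E_def)
  have u: "u \<ge> 0" using assms by (simp add: u_def E_def)
  have "\<delta> \<le> E / D - 1" unfolding \<delta>_def using D by (intro ln_le_minus_one) auto
  hence "\<delta> / D \<le> 1 / D^2" using D by (simp add: E_def field_simps power2_eq_square)
  moreover have "ln (D / Q) = u - \<delta>" using assms D by (simp add: u_def \<delta>_def ln_div)
  moreover have "(u - \<delta> + 2) / D - (u + 2) / E = (u + 2) / (D * E) - \<delta> / D"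
  proof -
    have "(u + 2) / D - (u + 2) / E = (u + 2) * (E - D) / (D * E)" using D by (simp add: field_simps)
    thus ?thesis by (simp add: E_def diff_divide_distrib add_divide_distrib)
  qed
  moreover have "u / E^2 + 1 / D^2 \<le> (u + 2) / (D * E)"
  proof -
    have "(u + 2) / (D * E) - u / E^2 = ((u + 2) * E - u * D) / (D * E^2)"
      using D by (simp add: field_simps power2_eq_square)
    also have "(u + 2) * E - u * D = u + 2 * E" by (simp add: E_def algebra_simps)
    also have "(u + 2 * E) / (D * E^2) \<ge> 2 * E / (D * E^2)"
      using u D by (intro divide_right_mono) auto
    also have "2 * E / (D * E^2) = 1 / (D * E / 2)" using D by (simp add: power2_eq_square)
    also have "\<dots> \<ge> 1 / D^2"
      using D mult_left_mono[of E "2 * D" D] by (intro divide_left_mono) (auto simp: power2_eq_square)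
    finally show ?thesis by simp
  qed
  ultimately show ?thesis by (simp add: u_def E_def)
qed

lemma moebius_tail_term_le:
  fixes D Q e c :: real
  assumes "Q > 0" "D \<ge> Q" "D \<ge> 1" "\<bar>e\<bar> \<le> 1" "c \<ge> 0"
  shows "- (e / (D + 1)^2 * (2 * ln (Q / (D + 1)) + c))
           \<le> c * (1 / D - 1 / (D + 1)) + 2 * ((ln (D / Q) + 2) / D - (ln ((D + 1) / Q) + 2) / (D + 1))"
proof -
  define L where "L = ln ((D + 1) / Q)"
  have L: "L \<ge> 0" "ln (Q / (D + 1)) = - L" using assms by (simp_all add: L_def ln_div)
  have "- (e / (D + 1)^2 * (2 * ln (Q / (D + 1)) + c)) \<le> \<bar>e / (D + 1)^2 * (c - 2 * L)\<bar>"
    using L(2) abs_ge_minus_self[of "e / (D + 1)^2 * (c - 2 * L)"] by simp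
  also have "\<dots> = \<bar>e\<bar> / (D + 1)^2 * \<bar>c - 2 * L\<bar>" by (simp add: abs_mult)
  also have "\<dots> \<le> 1 / (D + 1)^2 * (c + 2 * L)"
    using assms L by (intro mult_mono divide_right_mono) auto
  also have "\<dots> = c * (1 / (D + 1)^2) + 2 * (L / (D + 1)^2)" by (simp add: add_divide_distrib)
  also have "\<dots> \<le> c * (1 / D - 1 / (D + 1)) + 2 * ((ln (D / Q) + 2) / D - (L + 2) / (D + 1))"
    using assms inverse_Suc_square_le_telescope[of D] ln_over_square_le_telescope[of Q D]
    by (intro add_mono mult_left_mono) (auto simp: L_def)
  finally show ?thesis by (simp add: L_def)
qed

lemma moebius_tail_majorant_sums:
  assumes "Q \<ge> 1"
  defines "h \<equiv> \<lambda>n. 1 / real (n + Q)"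
    and "f \<equiv> \<lambda>n. (ln (real (n + Q) / real Q) + 2) / real (n + Q)"
  shows "(\<lambda>n. c * (h n - h (Suc n)) + 2 * (f n - f (Suc n))) sums ((c + 4) / real Q)"
proof -
  have "h \<longlonglongrightarrow> 0"
    using LIMSEQ_ignore_initial_segment[OF lim_inverse_n', of Q] by (simp add: h_def)
  moreover have "f \<longlonglongrightarrow> 0"
  proof -
    have "(\<lambda>n. ln (real (n + Q)) / real (n + Q) + (2 - ln (real Q)) * h n) \<longlonglongrightarrow> 0 + (2 - ln (real Q)) * 0"
      using LIMSEQ_ignore_initial_segment[OF lim_ln_over_n, of Q] \<open>h \<longlonglongrightarrow> 0\<close>
      by (intro tendsto_add tendsto_mult tendsto_const)
    moreover have "f = (\<lambda>n. ln (real (n + Q)) / real (n + Q) + (2 - ln (real Q)) * h n)"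
    proof
      fix n
      have "ln (real (n + Q) / real Q) = ln (real (n + Q)) - ln (real Q)"
        using assms by (simp add: ln_div)
      moreover have "(a - b + 2) / D = a / D + (2 - b) * (1 / D)" for a b D :: real
        by (simp add: diff_divide_distrib add_divide_distrib)
      ultimately show "f n = ln (real (n + Q)) / real (n + Q) + (2 - ln (real Q)) * h n"
        unfolding f_def h_def by simp
    qed
    ultimately show ?thesis by simp
  qed
  ultimately have "(\<lambda>n. h n - h (Suc n)) sums h 0" "(\<lambda>n. f n - f (Suc n)) sums f 0"
    using telescope_sums' by fastforce+
  hence "(\<lambda>n. c * (h n - h (Suc n)) + 2 * (f n - f (Suc n))) sums (c * h 0 + 2 * f 0)"
    by (intro sums_add sums_mult)
  moreover have "c * h 0 + 2 * f 0 = (c + 4) / real Q" by (simp add: h_def f_def add_divide_distrib)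
  ultimately show ?thesis by simp
qed

lemma sum_moebius_weighted_le:
  assumes "Q \<ge> 1" "c \<ge> 0"
  shows "(\<Sum>d=1..Q. moebius_mu d / real d ^ 2 * (2 * ln (real Q / real d) + c))
           \<le> (2 * ln (real Q) + c) * (6 / pi^2) - 2 * (deriv zeta_real 2 / (zeta_real 2)^2) + (c + 4) / real Q"
proof -
  define F where "F n = moebius_mu (Suc n) / real (Suc n) ^ 2 * (2 * ln (real Q / real (Suc n)) + c)" for n
  define h where "h = (\<lambda>n. 1 / real (n + Q))"
  define f where "f = (\<lambda>n. (ln (real (n + Q) / real Q) + 2) / real (n + Q))"
  have F: "F sums ((2 * ln (real Q) + c) * (6 / pi^2) - 2 * (deriv zeta_real 2 / (zeta_real 2)^2))"
    unfolding F_def using assms by (intro moebius_weighted_series_sums) simp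
  have majorant: "(\<lambda>n. c * (h n - h (Suc n)) + 2 * (f n - f (Suc n))) sums ((c + 4) / real Q)"
    unfolding h_def f_def using assms(1) by (rule moebius_tail_majorant_sums)
  have tail: "summable (\<lambda>n. F (n + Q))"
    using F by (intro summable_ignore_initial_segment sums_summable)
  have "- F (n + Q) \<le> c * (h n - h (Suc n)) + 2 * (f n - f (Suc n))" for n
    using moebius_tail_term_le[of "real Q" "real (n + Q)" "moebius_mu (Suc (n + Q))" c] assms
    by (simp add: F_def h_def f_def abs_moebius_mu_le add_ac)
  hence "(\<Sum>n. - F (n + Q)) \<le> (\<Sum>n. c * (h n - h (Suc n)) + 2 * (f n - f (Suc n)))"
    by (rule suminf_le[OF _ summable_minus[OF tail] sums_summable[OF majorant]])
  also have "\<dots> = (c + 4) / real Q" using majorant by (simp add: sums_iff)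
  finally have "- (\<Sum>n. F (n + Q)) \<le> (c + 4) / real Q" by (simp add: suminf_minus[OF tail])
  moreover have "(\<Sum>d=1..Q. moebius_mu d / real d ^ 2 * (2 * ln (real Q / real d) + c)) = (\<Sum>n<Q. F n)"
    unfolding F_def by (subst sum_bounds_lt_plus1[symmetric]) (rule refl)
  ultimately show ?thesis
    using suminf_split_initial_segment[OF sums_summable[OF F], of Q] F by (simp add: sums_iff)
qed

lemma real_div_nat_bounds:
  assumes "d > 0"
  shows "real (n div d) \<le> real n / real d" "real n / real d < real (n div d) + 1"
proof -
  have "real n = real (n div d) * real d + real (n mod d)"
    by (metis div_mult_mod_eq of_nat_add of_nat_mult)
  moreover have "real (n mod d) < real d" using assms by simp
  ultimately show "real (n div d) \<le> real n / real d" "real n / real d < real (n div d) + 1"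
    using assms by (simp_all add: field_simps)
qed

lemma moebius_pair_sum_term_le:
  assumes "1 \<le> d" "d \<le> Q"
  shows "moebius_mu d / real d ^ 2 * ((real Q / real d)^2 * pair_sum (Q div d))
           \<le> moebius_mu d / real d ^ 2 * (2 * ln (real Q / real d) + (2 * euler_mascheroni + 11/10))
             + 2/5 * (1 / real d ^ 2) + (6 * ln (real Q) + 16) / real Q * (1 / real d)"
proof -
  define y where "y = real Q / real d"
  have y: "Q div d \<ge> 1" "real (Q div d) \<le> y" "y < real (Q div d) + 1"
    using assms real_div_nat_bounds[of d Q] by (auto simp: y_def div_greater_zero_iff Suc_le_eq)
  have d: "real d \<ge> 1" "y \<ge> 1" using assms y by auto
  define G where "G = 2 * ln y + (2 * euler_mascheroni + 11/10)"
  have "moebius_mu d / real d ^ 2 * (y^2 * pair_sum (Q div d) - G)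
      \<le> \<bar>moebius_mu d / real d ^ 2\<bar> * \<bar>y^2 * pair_sum (Q div d) - G\<bar>"
    by (metis abs_ge_self abs_mult)
  also have "\<dots> \<le> 1 / real d ^ 2 * (2/5 + (6 * ln y + 16) / y)"
    using abs_pair_sum_asymp[OF y] abs_moebius_mu_le[of d] d
    by (intro mult_mono) (auto simp: G_def abs_div intro!: divide_right_mono)
  also have "\<dots> = 2/5 * (1 / real d ^ 2) + (6 * ln y + 16) / real Q * (1 / real d)"
    using d assms by (simp add: y_def field_simps power2_eq_square)
  also have "\<dots> \<le> 2/5 * (1 / real d ^ 2) + (6 * ln (real Q) + 16) / real Q * (1 / real d)"
    using d assms by (intro add_left_mono mult_right_mono divide_right_mono) (auto simp: y_def ln_div)
  finally show ?thesis by (simp add: y_def G_def algebra_simps)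
qed

lemma coprime_pair_sum_le:
  assumes "Q \<ge> 1"
  defines "c \<equiv> 2 * euler_mascheroni + 11/10"
  shows "real Q^2 * coprime_pair_sum Q
           \<le> (2 * ln (real Q) + c) * (6 / pi^2) - 2 * (deriv zeta_real 2 / (zeta_real 2)^2)
             + (c + 4) / real Q + 2/5 * (pi^2 / 6) + (6 * ln (real Q) + 16) * (ln (real Q) + 2) / real Q"
proof -
  have "real Q^2 * coprime_pair_sum Q
      = (\<Sum>d=1..Q. moebius_mu d / real d ^ 2 * ((real Q / real d)^2 * pair_sum (Q div d)))"
    unfolding coprime_pair_sum_moebius sum_distrib_left
    by (intro sum.cong refl) (simp add: field_simps power2_eq_square eval_nat_numeral)
  also have "\<dots> \<le> (\<Sum>d=1..Q. moebius_mu d / real d ^ 2 * (2 * ln (real Q / real d) + c)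
      + 2/5 * (1 / real d ^ 2) + (6 * ln (real Q) + 16) / real Q * (1 / real d))"
    unfolding c_def by (intro sum_mono moebius_pair_sum_term_le) auto
  also have "\<dots> = (\<Sum>d=1..Q. moebius_mu d / real d ^ 2 * (2 * ln (real Q / real d) + c))
      + 2/5 * (\<Sum>d=1..Q. 1 / real d ^ 2) + (6 * ln (real Q) + 16) / real Q * harm Q"
    by (simp add: sum.distrib sum_distrib_left harm_def inverse_eq_divide)
  also have "\<dots> \<le> (2 * ln (real Q) + c) * (6 / pi^2) - 2 * (deriv zeta_real 2 / (zeta_real 2)^2)
      + (c + 4) / real Q + 2/5 * (pi^2 / 6) + (6 * ln (real Q) + 16) / real Q * (ln (real Q) + 2)"
  proof -
    have "ln (real Q + 1) \<le> ln (real Q) + 1"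
      using ln_near_floor(1)[of Q "real Q"] assms divide_le_eq_1[of 1 "real Q"] by linarith
    hence "harm Q \<le> ln (real Q) + 2"
      using harm_le_ln_Suc_plus_euler_mascheroni[OF assms(1)] euler_mascheroni_bounds_numeral by linarith
    thus ?thesis
      using sum_moebius_weighted_le[OF assms(1), of c] sum_inverse_squares_le[of Q] assms
        euler_mascheroni_bounds_numeral
      by (intro add_mono mult_left_mono) (auto simp: c_def)
  qed
  finally show ?thesis by (simp add: algebra_simps)
qed

lemma pi_square_bounds: "9 < pi^2" "pi^2 < 10"
proof -
  have "3 < pi" "pi < 3.15" using pi_gt3 pi_approx(2) by simp_all
  hence "3 * 3 < pi * pi" "pi * pi < 3.15 * 3.15" by (intro mult_strict_mono; simp)+
  thus "9 < pi^2" "pi^2 < 10" by (simp_all add: power2_eq_square)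
qed

lemma scaled_S2_le:
  assumes "Q \<ge> 1"
  defines "L \<equiv> ln (real Q)"
  shows "real Q^2 * S2 Q \<le> 12 * L / pi^2 - 2 * (deriv zeta_real 2 / (zeta_real 2)^2)
           + (2 * euler_mascheroni + 1) * 6 / pi^2 + (64 * L^2 + 106 * L + 269) / real Q"
proof -
  define c :: real where "c = 2 * euler_mascheroni + 11/10"
  have Q: "real Q > 0" and "L \<ge> 0" using assms by (auto simp: L_def)
  have "real Q^2 * S2 Q \<le> real Q^2 * (coprime_pair_sum Q - 1 / real Q^2)"
    using S2_le_coprime_pair_sum[OF assms(1)] by (intro mult_left_mono) auto
  also have "\<dots> = real Q^2 * coprime_pair_sum Q - 1" using Q by (simp add: right_diff_distrib)
  finally have "real Q^2 * S2 Q \<le> real Q^2 * coprime_pair_sum Q - 1" .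
  moreover have "(2 * L + c) * (6 / pi^2) = 12 * L / pi^2 + (2 * euler_mascheroni + 1) * 6 / pi^2 + 3/5 / pi^2"
    by (simp add: c_def field_simps)
  text \<open>The term \<open>-1\<close> from the missing pair \<open>(1, Q)\<close> absorbs \<open>3/5 \<pi>\<^sup>-\<^sup>2\<close>, the surplus of the
    constant \<open>11/10\<close> over \<open>1\<close>, together with \<open>2/5 \<zeta>(2)\<close>.\<close>
  moreover have "3/5 / pi^2 \<le> 3/5 / 9" using pi_square_bounds by (intro divide_left_mono) auto
  moreover have "(c + 4) / real Q + (6 * L + 16) * (L + 2) / real Q \<le> (64 * L^2 + 106 * L + 269) / real Q"
  proof -
    have "(6 * L + 16) * (L + 2) = 6 * L^2 + 28 * L + 32" by (simp add: algebra_simps power2_eq_square)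
    hence "(c + 4) + (6 * L + 16) * (L + 2) \<le> 64 * L^2 + 106 * L + 269"
      using \<open>L \<ge> 0\<close> zero_le_power2[of L] euler_mascheroni_bounds_numeral unfolding c_def by linarith
    thus ?thesis using Q by (simp add: add_divide_distrib[symmetric] divide_right_mono)
  qed
  ultimately show ?thesis
    using coprime_pair_sum_le[OF assms(1)] pi_square_bounds unfolding L_def c_def by linarith
qed

theorem theorem2:
  fixes Q :: nat
  assumes "Q \<ge> 2"
  shows "S2 Q - (12 * ln (real Q) / (pi^2 * (real Q)^2)
           - 2 / (real Q)^2 * (deriv zeta_real 2 / (zeta_real 2)^2)
           + (2 * euler_mascheroni + 1) * 6 / ((real Q)^2 * pi^2))
         \<le> (64 * (ln (real Q))^2 + 106 * ln (real Q) + 269) / (real Q)^3"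
proof -
  define Z where "Z = deriv zeta_real 2 / (zeta_real 2)^2"
  define P where "P = 64 * (ln (real Q))^2 + 106 * ln (real Q) + 269"
  have Q: "real Q > 0" using assms by simp
  have "S2 Q = real Q^2 * S2 Q / real Q^2" using Q by simp
  also have "\<dots> \<le> (12 * ln (real Q) / pi^2 - 2 * Z + (2 * euler_mascheroni + 1) * 6 / pi^2
      + P / real Q) / real Q^2"
    using scaled_S2_le[of Q] assms by (intro divide_right_mono) (auto simp: Z_def P_def)
  also have "\<dots> = 12 * ln (real Q) / (pi^2 * (real Q)^2) - 2 / (real Q)^2 * Z
      + (2 * euler_mascheroni + 1) * 6 / ((real Q)^2 * pi^2) + P / real Q^3"
    using Q by (simp add: field_simps power2_eq_square power3_eq_cube)
  finally show ?thesis by (simp add: Z_def P_def)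
qed

end
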